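(* Let $\pi:L_{\mathcal F}\to L_{\mathcal G}$ satisfy (REG). For every $Y\in L^0(\Omega,\mathcal G,\mathbb P)$ and $\xi'\in L^*_{\mathcal F}\cap(L^1_{\mathcal F})_+$, with $\mu$ the measure $d\mu/d\mathbb P=\xi'$, the set \[\mathcal A(Y,\xi'):=\{\pi(\xi)\mid \xi\in L_{\mathcal F},\ E_{\mathbb P}[\xi'\xi\mid\mathcal G]\ge_\mu Y\}\] is downward directed; consequently there exists a sequence $(\eta_m)_{m\ge1}\subseteq L_{\mathcal F}$ with $E_{\mathbb P}[\xi'\eta_m\mid\mathcal G]\ge_\mu Y$ for all $m$ and $\pi(\eta_m)\downarrow R(Y,\xi')$ as $m\uparrow\infty$, where $R(Y,\xi'):=\inf\mathcal A(Y,\xi')$.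
   Context: Let $(\Omega,\mathcal F,\mathbb P)$ be a probability space and $\mathcal G\subseteq\mathcal F$ a sub-$\sigma$-algebra. (In)equalities hold $\mathbb P$-a.s. unless a measure is indicated ($\ge_\mu$ means $\mu$-a.e.); $\inf$ is the $\mathbb P$-essential infimum. $L_{\mathcal F}\subseteq L^0(\Omega,\mathcal F,\mathbb P)$, $L_{\mathcal G}\subseteq L^0(\Omega,\mathcal G,\mathbb P)$ are vector lattices closed under multiplication by indicators of $\mathcal F$- (resp. $\mathcal G$-) measurable sets; the order continuous dual $L^*_{\mathcal F}$ of $(L_{\mathcal F},\ge)$ is a lattice contained in $L^1_{\mathcal F}=L^1(\Omega,\mathcal F,\mathbb P)$ (functionals $X\mapsto E_{\mathbb P}[ZX]$), closed under multiplication by indicators of sets in $\mathcal F$. (REG): $\pi(X\mathbf 1_A+Y\mathbf 1_{A^c})=\pi(X)\mathbf 1_A+\pi(Y)\mathbf 1_{A^c}$ for all $X,Y\in L_{\mathcal F}$, $A\in\mathcal G$. A set of random variables is downward directed if for any two of its elements there is an element of the set below both. *)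

theory Defs
  imports "HOL-Probability.Probability"
begin

text \<open>Random variables are represented by real-valued functions; elements of L0 are
  a.e.-equivalence classes, so all sets of random variables below are required to be
  saturated under a.e. equality, and all (in)equalities are understood a.e.\<close>

definition ae_saturated :: "'a measure \<Rightarrow> 'a measure \<Rightarrow> ('a \<Rightarrow> real) set \<Rightarrow> bool" where
  "ae_saturated M N L \<longleftrightarrow>
     (\<forall>X\<in>L. \<forall>X'. X' \<in> borel_measurable N \<and> (AE x in M. X x = X' x) \<longrightarrow> X' \<in> L)"

definition L0_vector_lattice :: "'a measure \<Rightarrow> 'a measure \<Rightarrow> ('a \<Rightarrow> real) set \<Rightarrow> bool" where
  "L0_vector_lattice M N L \<longleftrightarrow>
     L \<subseteq> borel_measurable N \<and> ae_saturated M N L \<and>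
     (\<lambda>x. 0) \<in> L \<and>
     (\<forall>X\<in>L. \<forall>Y\<in>L. (\<lambda>x. X x + Y x) \<in> L) \<and>
     (\<forall>X\<in>L. \<forall>c::real. (\<lambda>x. c * X x) \<in> L) \<and>
     (\<forall>X\<in>L. \<forall>Y\<in>L. (\<lambda>x. max (X x) (Y x)) \<in> L) \<and>
     (\<forall>X\<in>L. \<forall>A\<in>sets N. (\<lambda>x. indicator A x * X x) \<in> L)"

definition REG :: "'a measure \<Rightarrow> 'a measure \<Rightarrow> ('a \<Rightarrow> real) set \<Rightarrow>
    (('a \<Rightarrow> real) \<Rightarrow> ('a \<Rightarrow> real)) \<Rightarrow> bool" where
  "REG M G LF \<pi> \<longleftrightarrow>
     (\<forall>X\<in>LF. \<forall>Y\<in>LF. \<forall>A\<in>sets G.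
        AE x in M. \<pi> (\<lambda>\<omega>. X \<omega> * indicator A \<omega> + Y \<omega> * indicator (space M - A) \<omega>) x
                   = \<pi> X x * indicator A x + \<pi> Y x * indicator (space M - A) x)"

text \<open>Order continuous dual of (L, a.e. order), represented inside L1:
  Z is integrable, Z*X is integrable for X in L, and X \<mapsto> E[Z X] is order continuous, i.e.
  for every downward directed D \<subseteq> L of nonnegative elements with infimum 0 in L,
  E[Z X] \<rightarrow> 0 along the net D.\<close>
definition order_cont_dual :: "'a measure \<Rightarrow> ('a \<Rightarrow> real) set \<Rightarrow> ('a \<Rightarrow> real) set" where
  "order_cont_dual M L = {Z. integrable M Z \<and> (\<forall>X\<in>L. integrable M (\<lambda>x. Z x * X x)) \<and>
     (\<forall>D. D \<subseteq> L \<and> D \<noteq> {} \<and>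
          (\<forall>X\<in>D. AE x in M. 0 \<le> X x) \<and>
          (\<forall>X1\<in>D. \<forall>X2\<in>D. \<exists>X3\<in>D. AE x in M. X3 x \<le> X1 x \<and> X3 x \<le> X2 x) \<and>
          (\<forall>W\<in>L. (\<forall>X\<in>D. AE x in M. W x \<le> X x) \<longrightarrow> (AE x in M. W x \<le> 0))
        \<longrightarrow> (\<forall>e>0. \<exists>X0\<in>D. \<forall>X\<in>D. (AE x in M. X x \<le> X0 x) \<longrightarrow>
                  \<bar>integral\<^sup>L M (\<lambda>x. Z x * X x)\<bar> < e))}"

definition down_directed :: "'a measure \<Rightarrow> ('a \<Rightarrow> real) set \<Rightarrow> bool" where
  "down_directed M S \<longleftrightarrow>
     (\<forall>X1\<in>S. \<forall>X2\<in>S. \<exists>X3\<in>S. AE x in M. X3 x \<le> X1 x \<and> X3 x \<le> X2 x)"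

definition is_ess_inf :: "'a measure \<Rightarrow> 'a measure \<Rightarrow> ('a \<Rightarrow> real) set \<Rightarrow> ('a \<Rightarrow> ereal) \<Rightarrow> bool" where
  "is_ess_inf M N S R \<longleftrightarrow>
     R \<in> borel_measurable N \<and>
     (\<forall>X\<in>S. AE x in M. R x \<le> ereal (X x)) \<and>
     (\<forall>R'\<in>borel_measurable N. (\<forall>X\<in>S. AE x in M. R' x \<le> ereal (X x)) \<longrightarrow>
        (AE x in M. R' x \<le> R x))"

definition acc_set :: "'a measure \<Rightarrow> 'a measure \<Rightarrow> ('a \<Rightarrow> real) set \<Rightarrow>
    (('a \<Rightarrow> real) \<Rightarrow> ('a \<Rightarrow> real)) \<Rightarrow> ('a \<Rightarrow> real) \<Rightarrow> ('a \<Rightarrow> real) \<Rightarrow> ('a \<Rightarrow> real) set" where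
  "acc_set M G LF \<pi> Y \<xi>' =
     {\<pi> \<xi> | \<xi>. \<xi> \<in> LF \<and>
        (AE x in density M (\<lambda>x. ennreal (\<xi>' x)).
           real_cond_exp M G (\<lambda>\<omega>. \<xi>' \<omega> * \<xi> \<omega>) x \<ge> Y x)}"

end

theory Submission
  imports Defs
begin

text \<open>Directedness: given \<open>\<xi>1\<close>, \<open>\<xi>2\<close> in the acceptance set, paste them along the
  \<open>G\<close>-measurable set \<open>{\<pi> \<xi>1 \<le> \<pi> \<xi>2}\<close>. By (REG) the pasted variable is mapped to
  \<open>min (\<pi> \<xi>1) (\<pi> \<xi>2)\<close>, and since conditional expectation commutes with multiplication by
  \<open>G\<close>-measurable indicators, it still satisfies the constraint.

  Approximating sequence: on a downward directed set \<open>S\<close> the bounded functional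
  \<open>X \<mapsto> E[arctan X]\<close> has an infimum \<open>c\<close>. Elements within \<open>1/(n+1)\<close> of \<open>c\<close> can be made
  decreasing by directedness. For \<open>X \<in> S\<close>, some element of \<open>S\<close> lies below \<open>min X f\<^sub>n\<close>, so
  \<open>E[arctan f\<^sub>n] - E[arctan (min X f\<^sub>n)] < 1/(n+1)\<close>; this gap dominates
  \<open>E[(inf\<^sub>n arctan f\<^sub>n - arctan X)\<^sup>+]\<close>, which therefore vanishes. Hence \<open>inf\<^sub>n f\<^sub>n\<close> is the
  essential infimum of \<open>S\<close>.\<close>

lemma abs_arctan_le: "\<bar>arctan y\<bar> \<le> pi / 2"
  using arctan_bounded[of y] by linarith

lemma (in finite_measure) integrable_arctan:
  assumes [measurable]: "X \<in> borel_measurable M"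
  shows "integrable M (\<lambda>x. arctan (X x))"
proof (rule integrable_const_bound[where B="pi/2"])
  show "AE x in M. norm (arctan (X x)) \<le> pi/2" by (simp only: real_norm_def abs_arctan_le AE_I2)
qed measurable

lemma (in finite_measure) integral_arctan_mono_AE:
  assumes "X \<in> borel_measurable M" "Y \<in> borel_measurable M" "AE x in M. X x \<le> Y x"
  shows "(\<integral>x. arctan (X x) \<partial>M) \<le> (\<integral>x. arctan (Y x) \<partial>M)"
  using assms by (intro integral_mono_AE integrable_arctan) (auto simp: arctan_le_iff)

lemma INF_ereal_le_if_INF_arctan_le:
  fixes f :: "nat \<Rightarrow> real"
  assumes "(INF n. arctan (f n)) \<le> arctan x"
  shows "(INF n. ereal (f n)) \<le> ereal x"
proof (rule ccontr)
  assume "\<not> ?thesis"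
  then obtain t where t: "x < t" "ereal t < (INF n. ereal (f n))"
    using ereal_dense2[of "ereal x"] by (auto simp: not_le)
  have "t < f n" for n using less_INF_D[OF t(2)] by simp
  then have "arctan t \<le> (INF n. arctan (f n))"
    by (intro cINF_greatest) (auto simp: arctan_le_iff less_imp_le)
  with assms t(1) show False using arctan_less_iff[of x t] by linarith
qed

lemma (in finite_measure) AE_INF_le_if_arctan_gap_vanishes:
  assumes f: "\<And>n. f n \<in> borel_measurable M" and X: "X \<in> borel_measurable M"
    and gap: "\<And>n. (\<integral>x. arctan (f n x) \<partial>M) - (\<integral>x. arctan (min (X x) (f n x)) \<partial>M)
                    < inverse (real (Suc n))"
  shows "AE x in M. (INF n. ereal (f n x)) \<le> ereal (X x)"
proof -
  define h where "h x = (INF n. arctan (f n x))" for x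
  have bdd: "bdd_below (range (\<lambda>n. arctan (f n x)))" for x
    by (auto intro!: bdd_belowI[where m="-(pi/2)"] less_imp_le simp: arctan_lbound)
  have h_le: "h x \<le> arctan (f n x)" for x n unfolding h_def by (rule cINF_lower[OF bdd]) simp
  have h_bounds: "\<bar>h x\<bar> \<le> pi/2" for x
  proof -
    have "- (pi/2) \<le> h x"
      unfolding h_def by (rule cINF_greatest) (auto intro: less_imp_le arctan_lbound)
    then show ?thesis using h_le[of x 0] arctan_ubound[of "f 0 x"] by linarith
  qed
  define \<phi> where "\<phi> x = max 0 (h x - arctan (X x))" for x
  have h_meas: "h \<in> borel_measurable M" unfolding h_def
    by (rule borel_measurable_cINF_real) (use f in auto)
  have \<phi>_int: "integrable M \<phi>"
  proof (rule integrable_const_bound[where B=pi])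
    show "AE x in M. norm (\<phi> x) \<le> pi"
    proof (rule AE_I2)
      fix x show "norm (\<phi> x) \<le> pi"
        using h_bounds[of x] abs_arctan_le[of "X x"] by (simp add: \<phi>_def)
    qed
  qed (unfold \<phi>_def, use h_meas X in measurable)
  \<comment> \<open>\<open>t \<mapsto> max 0 (t - a)\<close> is monotone, so \<open>\<phi>\<close> lies below every gap integrand\<close>
  have "integral\<^sup>L M \<phi> < inverse (real (Suc n))" for n
  proof -
    have "integral\<^sup>L M \<phi> \<le> (\<integral>x. arctan (f n x) - arctan (min (X x) (f n x)) \<partial>M)"
    proof (rule integral_mono[OF \<phi>_int])
      fix x
      show "\<phi> x \<le> arctan (f n x) - arctan (min (X x) (f n x))"
        using h_le[of x n] arctan_less_iff[of "f n x" "X x"] by (auto simp: \<phi>_def min_def)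
    qed (use integrable_arctan f X in auto)
    also have "\<dots> < inverse (real (Suc n))"
      using gap[of n] integrable_arctan f X by (subst Bochner_Integration.integral_diff) auto
    finally show ?thesis .
  qed
  then have "integral\<^sup>L M \<phi> \<le> 0"
    by (intro LIMSEQ_le_const[OF LIMSEQ_inverse_real_of_nat]) (auto intro: less_imp_le)
  moreover have "0 \<le> integral\<^sup>L M \<phi>" by (rule integral_nonneg_AE) (auto simp: \<phi>_def)
  ultimately have "AE x in M. \<phi> x = 0"
    using integral_nonneg_eq_0_iff_AE[OF \<phi>_int] by (auto simp: \<phi>_def)
  then show ?thesis
    by eventually_elim (auto simp: \<phi>_def h_def intro: INF_ereal_le_if_INF_arctan_le)
qed

lemma down_directed_decseq_below:
  assumes dd: "down_directed M S" and Z: "\<And>n. Z n \<in> S"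
  obtains f where "\<And>n. f n \<in> S" "\<And>n. AE x in M. f (Suc n) x \<le> f n x"
    "\<And>n. AE x in M. f n x \<le> Z n x"
proof -
  have "\<forall>n Q. \<exists>W. Q \<in> S \<longrightarrow> W \<in> S \<and> (AE x in M. W x \<le> Q x \<and> W x \<le> Z (Suc n) x)"
    using dd Z unfolding down_directed_def by blast
  then obtain step where step: "\<And>n Q. Q \<in> S \<Longrightarrow>
      step n Q \<in> S \<and> (AE x in M. step n Q x \<le> Q x \<and> step n Q x \<le> Z (Suc n) x)"
    by metis
  define f where "f = rec_nat (Z 0) step"
  have f_simps: "f 0 = Z 0" "f (Suc n) = step n (f n)" for n by (simp_all add: f_def)
  have f_in: "f n \<in> S" for n by (induction n) (use Z step f_simps in auto)
  show thesis
  proof (rule that[OF f_in])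
    show "AE x in M. f (Suc n) x \<le> f n x" for n
      using step[OF f_in[of n]] by (auto simp: f_simps)
    show "AE x in M. f n x \<le> Z n x" for n
      using step[OF f_in] by (cases n) (auto simp: f_simps)
  qed
qed

lemma (in finite_measure) down_directed_ess_inf_decseq:
  assumes S_meas: "S \<subseteq> borel_measurable M" and "S \<noteq> {}" and dd: "down_directed M S"
  obtains f where "\<And>m. f m \<in> S" "AE x in M. \<forall>m. f (Suc m) x \<le> f m x"
    "\<And>X. X \<in> S \<Longrightarrow> AE x in M. (INF m. ereal (f m x)) \<le> ereal (X x)"
proof -
  define E where "E X = (\<integral>x. arctan (X x) \<partial>M)" for X
  define c where "c = Inf (E ` S)"
  have "(\<integral>x. - (pi/2) \<partial>M) \<le> E X" if "X \<in> S" for X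
    using that S_meas unfolding E_def
    by (intro integral_mono integrable_arctan integrable_const) (auto intro: less_imp_le arctan_lbound)
  then have c_le: "c \<le> E X" if "X \<in> S" for X
    unfolding c_def using that by (intro cInf_lower bdd_belowI[where m="\<integral>x. - (pi/2) \<partial>M"]) auto
  have "\<exists>Z\<in>S. E Z < c + inverse (real (Suc n))" for n
  proof -
    have "Inf (E ` S) < c + inverse (real (Suc n))" by (simp add: c_def)
    then show ?thesis using cInf_lessD[of "E ` S"] \<open>S \<noteq> {}\<close> by blast
  qed
  then obtain Z where Z: "\<And>n. Z n \<in> S" "\<And>n. E (Z n) < c + inverse (real (Suc n))" by metis
  obtain f where f: "\<And>n. f n \<in> S" "\<And>n. AE x in M. f (Suc n) x \<le> f n x"
    and f_le_Z: "\<And>n. AE x in M. f n x \<le> Z n x"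
    using down_directed_decseq_below[of M S Z, OF dd Z(1)] by metis
  have f_meas: "f n \<in> borel_measurable M" for n using f(1) S_meas by blast
  have Ef: "E (f n) < c + inverse (real (Suc n))" for n
  proof -
    have "E (f n) \<le> E (Z n)"
      unfolding E_def using Z(1) S_meas by (intro integral_arctan_mono_AE[OF f_meas _ f_le_Z]) blast
    then show ?thesis using Z(2)[of n] by linarith
  qed
  have f_mono: "AE x in M. \<forall>m. f (Suc m) x \<le> f m x"
    using f(2) by (simp add: AE_all_countable)
  have f_lower: "AE x in M. (INF m. ereal (f m x)) \<le> ereal (X x)" if X: "X \<in> S" for X
  proof (rule AE_INF_le_if_arctan_gap_vanishes[OF f_meas])
    show X_meas: "X \<in> borel_measurable M" using X S_meas by blast
    fix n
    obtain W where W: "W \<in> S" "AE x in M. W x \<le> X x \<and> W x \<le> f n x"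
      using dd[unfolded down_directed_def, rule_format, OF X f(1)[of n]] by blast
    from W(2) have "AE x in M. W x \<le> min (X x) (f n x)" by eventually_elim simp
    then have "E W \<le> (\<integral>x. arctan (min (X x) (f n x)) \<partial>M)"
      unfolding E_def using W(1) S_meas X_meas f_meas
      by (intro integral_arctan_mono_AE) auto
    with Ef[of n] c_le[OF W(1)]
    show "(\<integral>x. arctan (f n x) \<partial>M) - (\<integral>x. arctan (min (X x) (f n x)) \<partial>M)
        < inverse (real (Suc n))"
      unfolding E_def by linarith
  qed
  show thesis by (rule that[OF f(1) f_mono f_lower])
qed

lemma is_ess_inf_INF_seq:
  fixes f :: "nat \<Rightarrow> 'a \<Rightarrow> real" and M N :: "'a measure"
  assumes "\<And>m. f m \<in> S" "\<And>m. f m \<in> borel_measurable N"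
    and "\<And>X. X \<in> S \<Longrightarrow> AE x in M. (INF m. ereal (f m x)) \<le> ereal (X x)"
  shows "is_ess_inf M N S (\<lambda>x. INF m. ereal (f m x))"
  unfolding is_ess_inf_def
proof (intro conjI ballI impI)
  fix R' :: "'a \<Rightarrow> ereal" assume "\<forall>X\<in>S. AE x in M. R' x \<le> ereal (X x)"
  then have "AE x in M. \<forall>m. R' x \<le> ereal (f m x)" using assms(1) by (simp add: AE_all_countable)
  then show "AE x in M. R' x \<le> (INF m. ereal (f m x))" by (auto intro: INF_greatest)
qed (use assms in auto)

lemma L0_vector_lattice_paste:
  assumes L: "L0_vector_lattice M N L" and "X \<in> L" "Y \<in> L" "A \<in> sets N"
  shows "(\<lambda>\<omega>. X \<omega> * indicator A \<omega> + Y \<omega> * indicator (space N - A) \<omega>) \<in> L"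
proof -
  have add: "\<forall>X\<in>L. \<forall>Y\<in>L. (\<lambda>x. X x + Y x) \<in> L"
    and ind: "\<forall>X\<in>L. \<forall>A\<in>sets N. (\<lambda>x. indicator A x * X x) \<in> L"
    using L by (simp_all add: L0_vector_lattice_def)
  have "space N - A \<in> sets N" using \<open>A \<in> sets N\<close> by blast
  then have "(\<lambda>\<omega>. indicator A \<omega> * X \<omega> + indicator (space N - A) \<omega> * Y \<omega>) \<in> L"
    using add[rule_format, OF ind[rule_format, OF \<open>X \<in> L\<close> \<open>A \<in> sets N\<close>]
        ind[rule_format, OF \<open>Y \<in> L\<close>]] by simp
  then show ?thesis by (simp add: mult.commute)
qed

lemma (in sigma_finite_subalgebra) real_cond_exp_paste:
  assumes A: "A \<in> sets F" and f: "integrable M f" and g: "integrable M g"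
  shows "AE x in M.
    real_cond_exp M F (\<lambda>\<omega>. f \<omega> * indicator A \<omega> + g \<omega> * indicator (space M - A) \<omega>) x
      = real_cond_exp M F f x * indicator A x + real_cond_exp M F g x * indicator (space M - A) x"
proof -
  define B where "B = space M - A"
  have B: "B \<in> sets F"
    using A subalg unfolding B_def by (metis sets.compl_sets subalgebra_def)
  have A_M: "A \<in> sets M" and B_M: "B \<in> sets M" using A B subalg by (auto simp: subalgebra_def)
  have fA: "integrable M (\<lambda>\<omega>. indicator A \<omega> * f \<omega>)"
    using integrable_mult_indicator[OF A_M f] by simp
  have gB: "integrable M (\<lambda>\<omega>. indicator B \<omega> * g \<omega>)"
    using integrable_mult_indicator[OF B_M g] by simp
  have "AE x in M. real_cond_exp M F (\<lambda>\<omega>. indicator A \<omega> * f \<omega> + indicator B \<omega> * g \<omega>) x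
      = real_cond_exp M F (\<lambda>\<omega>. indicator A \<omega> * f \<omega>) x
        + real_cond_exp M F (\<lambda>\<omega>. indicator B \<omega> * g \<omega>) x"
    by (rule real_cond_exp_add[OF fA gB])
  moreover have "AE x in M. real_cond_exp M F (\<lambda>\<omega>. indicator A \<omega> * f \<omega>) x
      = indicator A x * real_cond_exp M F f x"
    using real_cond_exp_mult[OF borel_measurable_indicator[OF A] borel_measurable_integrable[OF f] fA] .
  moreover have "AE x in M. real_cond_exp M F (\<lambda>\<omega>. indicator B \<omega> * g \<omega>) x
      = indicator B x * real_cond_exp M F g x"
    using real_cond_exp_mult[OF borel_measurable_indicator[OF B] borel_measurable_integrable[OF g] gB] .
  moreover have "(\<lambda>\<omega>. f \<omega> * indicator A \<omega> + g \<omega> * indicator B \<omega>)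
      = (\<lambda>\<omega>. indicator A \<omega> * f \<omega> + indicator B \<omega> * g \<omega>)"
    by (simp add: fun_eq_iff mult.commute)
  ultimately show ?thesis unfolding B_def[symmetric]
    by (elim AE_mp) (intro AE_I2 impI, simp only: mult.commute)
qed

lemma acc_set_down_directed:
  assumes G: "sigma_finite_subalgebra M G" and LF: "L0_vector_lattice M M LF"
    and \<pi>_meas: "\<And>X. X \<in> LF \<Longrightarrow> \<pi> X \<in> borel_measurable G" and reg: "REG M G LF \<pi>"
    and \<xi>'_meas: "\<xi>' \<in> borel_measurable M"
    and \<xi>'_int: "\<And>X. X \<in> LF \<Longrightarrow> integrable M (\<lambda>x. \<xi>' x * X x)"
  shows "down_directed M (acc_set M G LF \<pi> Y \<xi>')"
  unfolding down_directed_def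
proof (intro ballI)
  interpret sigma_finite_subalgebra M G by (rule G)
  have space_G: "space G = space M" using subalg by (simp add: subalgebra_def)
  have "(\<lambda>x. ennreal (\<xi>' x)) \<in> borel_measurable M" using \<xi>'_meas by simp
  note AE_dens = AE_density[OF this]
  fix X1 X2 assume "X1 \<in> acc_set M G LF \<pi> Y \<xi>'" "X2 \<in> acc_set M G LF \<pi> Y \<xi>'"
  then obtain \<xi>1 \<xi>2 where \<xi>1: "X1 = \<pi> \<xi>1" "\<xi>1 \<in> LF"
      "AE x in M. 0 < \<xi>' x \<longrightarrow> Y x \<le> real_cond_exp M G (\<lambda>\<omega>. \<xi>' \<omega> * \<xi>1 \<omega>) x"
    and \<xi>2: "X2 = \<pi> \<xi>2" "\<xi>2 \<in> LF"
      "AE x in M. 0 < \<xi>' x \<longrightarrow> Y x \<le> real_cond_exp M G (\<lambda>\<omega>. \<xi>' \<omega> * \<xi>2 \<omega>) x"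
    unfolding acc_set_def AE_dens by auto
  define A where "A = {x \<in> space G. \<pi> \<xi>1 x \<le> \<pi> \<xi>2 x}"
  define \<xi> where "\<xi> \<omega> = \<xi>1 \<omega> * indicator A \<omega> + \<xi>2 \<omega> * indicator (space M - A) \<omega>" for \<omega>
  have A: "A \<in> sets G"
    unfolding A_def using \<pi>_meas[OF \<xi>1(2)] \<pi>_meas[OF \<xi>2(2)] by measurable
  have "\<xi> \<in> LF" unfolding \<xi>_def using L0_vector_lattice_paste[OF LF \<xi>1(2) \<xi>2(2)] A subalg
    by (auto simp: subalgebra_def)
  have "AE x in M. \<pi> \<xi> x = \<pi> \<xi>1 x * indicator A x + \<pi> \<xi>2 x * indicator (space M - A) x"
    using reg[unfolded REG_def, rule_format, OF \<xi>1(2) \<xi>2(2) A] unfolding \<xi>_def .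
  then have \<pi>_\<xi>: "AE x in M. \<pi> \<xi> x \<le> X1 x \<and> \<pi> \<xi> x \<le> X2 x"
    by (rule AE_mp) (auto simp: \<xi>1(1) \<xi>2(1) A_def space_G split: split_indicator)
  have "(\<lambda>\<omega>. \<xi>' \<omega> * \<xi> \<omega>)
      = (\<lambda>\<omega>. \<xi>' \<omega> * \<xi>1 \<omega> * indicator A \<omega> + \<xi>' \<omega> * \<xi>2 \<omega> * indicator (space M - A) \<omega>)"
    by (simp add: \<xi>_def fun_eq_iff distrib_left)
  then have "AE x in M. real_cond_exp M G (\<lambda>\<omega>. \<xi>' \<omega> * \<xi> \<omega>) x
      = real_cond_exp M G (\<lambda>\<omega>. \<xi>' \<omega> * \<xi>1 \<omega>) x * indicator A x
        + real_cond_exp M G (\<lambda>\<omega>. \<xi>' \<omega> * \<xi>2 \<omega>) x * indicator (space M - A) x"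
    using real_cond_exp_paste[OF A \<xi>'_int[OF \<xi>1(2)] \<xi>'_int[OF \<xi>2(2)]] by simp
  with \<xi>1(3) \<xi>2(3) AE_space
  have "AE x in M. 0 < \<xi>' x \<longrightarrow> Y x \<le> real_cond_exp M G (\<lambda>\<omega>. \<xi>' \<omega> * \<xi> \<omega>) x"
    by eventually_elim (auto split: split_indicator)
  with \<open>\<xi> \<in> LF\<close> have "\<pi> \<xi> \<in> acc_set M G LF \<pi> Y \<xi>'"
    unfolding acc_set_def AE_dens by auto
  then show "\<exists>X3\<in>acc_set M G LF \<pi> Y \<xi>'. AE x in M. X3 x \<le> X1 x \<and> X3 x \<le> X2 x"
    using \<pi>_\<xi> by (intro bexI[where x="\<pi> \<xi>"])
qed

lemma (in finite_measure) down_directed_image_ess_inf_decseq: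
  fixes \<pi> :: "'b \<Rightarrow> 'a \<Rightarrow> real"
  assumes "subalgebra M G" and \<pi>_meas: "\<And>\<xi>. \<xi> \<in> L \<Longrightarrow> \<pi> \<xi> \<in> borel_measurable G"
    and dd: "down_directed M {\<pi> \<xi> | \<xi>. \<xi> \<in> L \<and> P \<xi>}"
    and ne: "{\<pi> \<xi> | \<xi>. \<xi> \<in> L \<and> P \<xi>} \<noteq> {}"
  shows "\<exists>R \<eta>. is_ess_inf M G {\<pi> \<xi> | \<xi>. \<xi> \<in> L \<and> P \<xi>} R \<and> (\<forall>m. \<eta> m \<in> L \<and> P (\<eta> m)) \<and>
    (AE x in M. \<forall>m. \<pi> (\<eta> (Suc m)) x \<le> \<pi> (\<eta> m) x) \<and>
    (AE x in M. (\<lambda>m. ereal (\<pi> (\<eta> m) x)) \<longlonglongrightarrow> R x)"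
proof -
  let ?S = "{\<pi> \<xi> | \<xi>. \<xi> \<in> L \<and> P \<xi>}"
  have "?S \<subseteq> borel_measurable M"
    using \<pi>_meas measurable_from_subalg[OF \<open>subalgebra M G\<close>] by blast
  then obtain f where f: "\<And>m. f m \<in> ?S" "AE x in M. \<forall>m. f (Suc m) x \<le> f m x"
    and f_lower: "\<And>X. X \<in> ?S \<Longrightarrow> AE x in M. (INF m. ereal (f m x)) \<le> ereal (X x)"
    using down_directed_ess_inf_decseq[OF _ ne dd] by blast
  have "\<forall>m. \<exists>\<xi>. f m = \<pi> \<xi> \<and> \<xi> \<in> L \<and> P \<xi>" using f(1) by blast
  then obtain \<eta> where \<eta>: "\<And>m. f m = \<pi> (\<eta> m)" "\<And>m. \<eta> m \<in> L \<and> P (\<eta> m)" by metis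
  have "is_ess_inf M G ?S (\<lambda>x. INF m. ereal (f m x))"
    using f(1) \<pi>_meas \<eta> f_lower by (intro is_ess_inf_INF_seq) auto
  moreover have "AE x in M. (\<lambda>m. ereal (f m x)) \<longlonglongrightarrow> (INF m. ereal (f m x))"
    using f(2) by eventually_elim (intro LIMSEQ_INF decseq_SucI, simp)
  ultimately show ?thesis using \<eta> f(2) by (intro exI[of _ "\<lambda>x. INF m. ereal (f m x)"] exI[of _ \<eta>]) simp
qed

theorem lemma17:
  fixes M G :: "'a measure"
    and LF LG :: "('a \<Rightarrow> real) set"
    and \<pi> :: "('a \<Rightarrow> real) \<Rightarrow> ('a \<Rightarrow> real)"
    and Y \<xi>' :: "'a \<Rightarrow> real"
  assumes "prob_space M"
    and "subalgebra M G"
    and "L0_vector_lattice M M LF"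
    and "L0_vector_lattice M G LG"
    and "\<forall>X\<in>LF. \<pi> X \<in> LG"
    and "\<forall>X\<in>LF. \<forall>X'\<in>LF. (AE x in M. X x = X' x) \<longrightarrow> (AE x in M. \<pi> X x = \<pi> X' x)"
    and "REG M G LF \<pi>"
    and "Y \<in> borel_measurable G"
    and "\<xi>' \<in> order_cont_dual M LF"
    and "AE x in M. 0 \<le> \<xi>' x"
  shows "down_directed M (acc_set M G LF \<pi> Y \<xi>') \<and>
    (acc_set M G LF \<pi> Y \<xi>' \<noteq> {} \<longrightarrow>
      (\<exists>R \<eta>. is_ess_inf M G (acc_set M G LF \<pi> Y \<xi>') R \<and>
        (\<forall>m::nat. \<eta> m \<in> LF \<and>
           (AE x in density M (\<lambda>x. ennreal (\<xi>' x)).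
              real_cond_exp M G (\<lambda>\<omega>. \<xi>' \<omega> * \<eta> m \<omega>) x \<ge> Y x)) \<and>
        (AE x in M. \<forall>m. \<pi> (\<eta> (Suc m)) x \<le> \<pi> (\<eta> m) x) \<and>
        (AE x in M. (\<lambda>m. ereal (\<pi> (\<eta> m) x)) \<longlonglongrightarrow> R x)))"
proof -
  interpret prob_space M by (rule assms(1))
  have G: "sigma_finite_subalgebra M G"
    using \<open>subalgebra M G\<close> by (intro finite_measure_subalgebra_is_sigma_finite)
      (simp add: finite_measure_subalgebra_def finite_measure_subalgebra_axioms_def finite_measure_axioms)
  have \<pi>_meas: "\<pi> X \<in> borel_measurable G" if "X \<in> LF" for X
    using assms(4,5) that unfolding L0_vector_lattice_def by blast
  have \<xi>'_int: "integrable M (\<lambda>x. \<xi>' x * X x)" if "X \<in> LF" for X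
    using assms(9) that unfolding order_cont_dual_def by blast
  have \<xi>'_meas: "\<xi>' \<in> borel_measurable M"
    using assms(9) unfolding order_cont_dual_def by auto
  have dd: "down_directed M (acc_set M G LF \<pi> Y \<xi>')"
    by (rule acc_set_down_directed[OF G assms(3) \<pi>_meas assms(7) \<xi>'_meas \<xi>'_int])
  show ?thesis
    using dd down_directed_image_ess_inf_decseq[OF \<open>subalgebra M G\<close> \<pi>_meas dd[unfolded acc_set_def]]
    unfolding acc_set_def by simp
qed

end
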